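(* For every integer $\ell\ge 0$ and every $\mathbf z=(z_1,\dots,z_{K-1})\in[0,1]^{K-1}$, $$G_\ell(z_1,\dots,z_{K-1})=(1-r)\,\zeta_-(z_1,\dots,z_{K-1})^{\ell}\prod_{\kappa=1}^{K-1}\frac{1-z_\kappa\,\zeta_-(z_1,\dots,z_\kappa)}{1-z_\kappa\,\zeta_-(z_1,\dots,z_{\kappa-1})},$$ and all denominators in this product are strictly positive on $[0,1]^{K-1}$. In particular $P(\mathbf 0)=G_0(0,\dots,0)=1-r$ and $G_\ell=G_0\cdot\zeta_-(z_1,\dots,z_{K-1})^\ell$.
   Context: Fix integers $c\ge 1$, $K\ge 2$ and reals $r_1,\dots,r_K>0$ with $r=\sum_{k=1}^K r_k<1$ (here $r_k=\lambda_k/(c\mu)$ for an M/M/$c$ queue with $K$ non-preemptive priority levels, level 1 the highest, Poisson arrival rates $\lambda_k$ and common exponential service rate $\mu$). Write $\sigma_k=\sum_{j=1}^k r_j$ ($\sigma_0=0$, $\sigma_K=r$), $\mathbf e_\kappa$ for the standard unit vectors of $\mathbb Z^K$, $\delta_{ij}$ for the Kronecker delta. Consider the equations for $(p_{\mathbf n})_{\mathbf n\in\mathbb N_0^K}$, with the convention $p_{\mathbf n}=0$ if some component of $\mathbf n$ is negative: $$(1+r)p_{\mathbf n}=\Big(\prod_{j=1}^K\delta_{0n_j}\Big)p_{\mathbf n}+\sum_{\kappa=1}^K\Big[r_\kappa p_{\mathbf n-\mathbf e_\kappa}+\Big(\prod_{j=1}^{\kappa-1}\delta_{0n_j}\Big)p_{\mathbf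 n+\mathbf e_\kappa}\Big],\quad \mathbf n\in\mathbb N_0^K .$$ These are the stationary balance equations for the states in which all $c$ servers are busy and $n_\kappa$ clients of level $\kappa$ wait in the queue; their nonnegative summable solutions form a one-dimensional cone, and $P$ denotes the unique solution with $\sum_{\mathbf n}P(\mathbf n)=1$ (the joint queue-length distribution conditional on all servers busy). For $\kappa=0,1,\dots,K-1$ and $z_1,\dots,z_\kappa\in[0,1]$ define $\beta(z_1,\dots,z_\kappa)=\sum_{k=1}^\kappa z_k r_{K+1-k}$ (so $\beta()=0$) and $$\zeta_\pm(z_1,\dots,z_\kappa)=\tfrac12\Big[1+r-\beta\pm\sqrt{(1+r-\beta)^2-4\sigma_{K-\kappa}}\Big],\quad \beta=\beta(z_1,\dots,z_\kappa),$$ the two real roots of $\zeta^2-(1+r-\beta)\zeta+\sigma_{K-\kappa}=0$ (the discriminant is positive there); in particular $\zeta_+()=1$, $\zeta_-()=r$. For $\ell\ge0$ define the generating function $$G_\ell(z_1,\dots,z_{K-1})=\sum_{n_2,\dots,n_K\ge0}P(\ell,n_2,\dots,n_K)\prod_{j=2}^K z_{K+1-j}^{\,n_j},$$ so $z_1$ is paired with the lowest level $K$ and $z_{K-1}$ with level $2$. *)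

theory Defs
  imports "HOL-Analysis.Analysis"
begin

text \<open>States: vectors n in N_0^K, represented as functions nat => nat supported on {1..K}
  (component n k is the number of waiting level-k clients).\<close>
definition states :: "nat \<Rightarrow> (nat \<Rightarrow> nat) set" where
  "states K = {n. \<forall>k. k \<notin> {1..K} \<longrightarrow> n k = 0}"

definition sigma :: "(nat \<Rightarrow> real) \<Rightarrow> nat \<Rightarrow> real" where
  "sigma r k = (\<Sum>j=1..k. r j)"

text \<open>Balance equation at state n; p at a vector with a negative component is 0.\<close>
definition balance_eq :: "nat \<Rightarrow> (nat \<Rightarrow> real) \<Rightarrow> ((nat \<Rightarrow> nat) \<Rightarrow> real) \<Rightarrow> (nat \<Rightarrow> nat) \<Rightarrow> bool" where
  "balance_eq K r p n \<longleftrightarrow>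
     (1 + sigma r K) * p n =
       (if (\<forall>j\<in>{1..K}. n j = 0) then p n else 0)
     + (\<Sum>\<kappa>=1..K.
          r \<kappa> * (if n \<kappa> > 0 then p (n(\<kappa> := n \<kappa> - 1)) else 0)
        + (if (\<forall>j\<in>{1..<\<kappa>}. n j = 0) then p (n(\<kappa> := n \<kappa> + 1)) else 0))"

definition is_normalized_solution :: "nat \<Rightarrow> (nat \<Rightarrow> real) \<Rightarrow> ((nat \<Rightarrow> nat) \<Rightarrow> real) \<Rightarrow> bool" where
  "is_normalized_solution K r p \<longleftrightarrow>
     (\<forall>n\<in>states K. p n \<ge> 0) \<and> p summable_on states K \<and> infsum p (states K) = 1 \<and>
     (\<forall>n\<in>states K. balance_eq K r p n)"

definition beta :: "nat \<Rightarrow> (nat \<Rightarrow> real) \<Rightarrow> nat \<Rightarrow> (nat \<Rightarrow> real) \<Rightarrow> real" where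
  "beta K r \<kappa> z = (\<Sum>k=1..\<kappa>. z k * r (K + 1 - k))"

definition zeta_minus :: "nat \<Rightarrow> (nat \<Rightarrow> real) \<Rightarrow> nat \<Rightarrow> (nat \<Rightarrow> real) \<Rightarrow> real" where
  "zeta_minus K r \<kappa> z =
     (let b = beta K r \<kappa> z in
      ((1 + sigma r K - b) - sqrt ((1 + sigma r K - b)^2 - 4 * sigma r (K - \<kappa>))) / 2)"

definition zeta_plus :: "nat \<Rightarrow> (nat \<Rightarrow> real) \<Rightarrow> nat \<Rightarrow> (nat \<Rightarrow> real) \<Rightarrow> real" where
  "zeta_plus K r \<kappa> z =
     (let b = beta K r \<kappa> z in
      ((1 + sigma r K - b) + sqrt ((1 + sigma r K - b)^2 - 4 * sigma r (K - \<kappa>))) / 2)"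

definition genfun :: "nat \<Rightarrow> ((nat \<Rightarrow> nat) \<Rightarrow> real) \<Rightarrow> nat \<Rightarrow> (nat \<Rightarrow> real) \<Rightarrow> real" where
  "genfun K p l z = (\<Sum>\<^sub>\<infinity> n \<in> {n \<in> states K. n 1 = l}. p n * (\<Prod>j=2..K. z (K + 1 - j) ^ n j))"

end

theory Submission
  imports Defs
begin

text \<open>Multiplying the balance equations by \<open>\<Prod>\<^sub>j z\<^sub>K\<^sub>+\<^sub>1\<^sub>-\<^sub>j\<^bsup>n\<^sub>j\<^esup>\<close> and summing over
  the states with \<open>n\<^sub>1 = l \<ge> 1\<close> gives the recurrence
  \<open>G\<^sub>l\<^sub>+\<^sub>1 = (1 + r - \<beta>) G\<^sub>l - r\<^sub>1 G\<^sub>l\<^sub>-\<^sub>1\<close>, whose characteristic roots satisfy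
  \<open>\<zeta>\<^sub>- < 1 \<le> \<zeta>\<^sub>+\<close>. As \<open>\<Sum>\<^sub>l G\<^sub>l \<le> 1\<close>, only the \<open>\<zeta>\<^sub>-\<close>-component survives: \<open>G\<^sub>l = G\<^sub>0 \<zeta>\<^sub>-\<^sup>l\<close>,
  and the joint generating function with an extra variable \<open>x\<close> for level 1 is
  \<open>G\<^sub>0 / (1 - x \<zeta>\<^sub>-)\<close>.

  Lumping levels 1 and 2 yields a queue of the same kind with \<open>K - 1\<close> levels and the same
  \<open>\<zeta>\<^sub>-(z\<^sub>1, \<dots>, z\<^sub>\<kappa>)\<close> for \<open>\<kappa> \<le> K - 2\<close>. At \<open>x = z\<^sub>K\<^sub>-\<^sub>1\<close> levels 1 and 2 carry the same
  variable, so the two joint generating functions agree there; this expresses \<open>G\<^sub>0\<close> through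
  the \<open>G\<^sub>0\<close> of the lumped queue. Induction on \<open>K\<close>, starting from \<open>G\<^sub>0 = 1 - r\<close> for one level,
  gives the product formula.\<close>

lemma has_sum_sum:
  fixes f :: "'i \<Rightarrow> 'a \<Rightarrow> real"
  assumes "finite I" "\<And>i. i \<in> I \<Longrightarrow> (f i has_sum s i) A"
  shows "((\<lambda>x. \<Sum>i\<in>I. f i x) has_sum (\<Sum>i\<in>I. s i)) A"
  using assms by (induction I rule: finite_induct) (simp_all add: has_sum_add)

lemma infsum_fibers:
  fixes f :: "'a \<Rightarrow> real" and h :: "'a \<Rightarrow> 'b"
  assumes f: "f summable_on A" and "h ` A \<subseteq> B"
  shows "(\<lambda>b. infsum f {a\<in>A. h a = b}) summable_on B"
    and "infsum f A = infsum (\<lambda>b. infsum f {a\<in>A. h a = b}) B"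
proof -
  let ?S = "Sigma B (\<lambda>b. {a\<in>A. h a = b})"
  have bij: "bij_betw (\<lambda>a. (h a, a)) A ?S"
    using \<open>h ` A \<subseteq> B\<close> by (auto simp: bij_betw_def inj_on_def image_iff)
  have S: "(\<lambda>(b, a). f a) summable_on ?S"
    using summable_on_reindex_bij_betw[OF bij, of "\<lambda>(b, a). f a"] f by simp
  then show "(\<lambda>b. infsum f {a\<in>A. h a = b}) summable_on B"
    using summable_on_Sigma_banach by fastforce
  have "infsum (\<lambda>b. infsum f {a\<in>A. h a = b}) B = infsum (\<lambda>(b, a). f a) ?S"
    using infsum_Sigma'_banach[OF S] by simp
  also have "\<dots> = infsum f A"
    using infsum_reindex_bij_betw[OF bij, of "\<lambda>(b, a). f a"] by simp
  finally show "infsum f A = infsum (\<lambda>b. infsum f {a\<in>A. h a = b}) B" by simp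
qed

lemma bounded_nonneg_recurrence_solution_geometric:
  fixes g :: "nat \<Rightarrow> real" and a b C :: real
  assumes rec: "\<And>l. l \<ge> 1 \<Longrightarrow> g (l + 1) = (a + b) * g l - a * b * g (l - 1)"
    and a: "0 \<le> a" "a \<le> 1" and b: "b \<ge> 1"
    and g_nonneg: "\<And>l. g l \<ge> 0" and bounded: "\<And>N. (\<Sum>l<N. g l) \<le> C"
  shows "g l = g 0 * a ^ l"
proof -
  define d where "d l = g (Suc l) - a * g l" for l
  have d_power: "d l = b ^ l * d 0" for l
  proof (induction l)
    case (Suc l)
    have "d (Suc l) = b * d l" using rec[of "Suc l"] by (simp add: d_def algebra_simps)
    then show ?case using Suc.IH by simp
  qed simp
  have "summable g" using g_nonneg bounded by (intro summableI_nonneg_bounded)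
  then have "g \<longlonglongrightarrow> 0" by (rule summable_LIMSEQ_zero)
  then have "d \<longlonglongrightarrow> 0 - a * 0"
    unfolding d_def by (intro tendsto_diff tendsto_mult_left) (rule LIMSEQ_Suc)
  then have "(\<lambda>l. \<bar>d l\<bar>) \<longlonglongrightarrow> 0" by (intro tendsto_rabs_zero) simp
  moreover have "\<bar>d 0\<bar> \<le> \<bar>d l\<bar>" for l
  proof -
    have "\<bar>d 0\<bar> \<le> b ^ l * \<bar>d 0\<bar>" using b by (simp add: one_le_power mult_le_cancel_right1)
    then show ?thesis using b d_power[of l] by (simp add: abs_mult)
  qed
  ultimately have "\<bar>d 0\<bar> \<le> 0" by (intro LIMSEQ_le_const[of "\<lambda>l. \<bar>d l\<bar>"]) blast+
  then have g_Suc: "g (Suc l) = a * g l" for l using d_power[of l] by (simp add: d_def)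
  show ?thesis by (induction l) (simp_all add: g_Suc mult_ac)
qed

lemma quadratic_smaller_root_bounds:
  fixes s c :: real
  assumes c: "0 < c" "c < 1" and s: "s \<ge> 1 + c"
  defines "\<zeta> \<equiv> (s - sqrt (s\<^sup>2 - 4 * c)) / 2"
  shows "0 < \<zeta>" "\<zeta> < 1" "s - \<zeta> \<ge> 1" "\<zeta> * (s - \<zeta>) = c"
proof -
  define D where "D = s\<^sup>2 - 4 * c"
  have "(1 - c)\<^sup>2 \<le> D"
  proof -
    have "(1 + c)\<^sup>2 \<le> s\<^sup>2" using s c by (intro power_mono) auto
    then show ?thesis by (simp add: D_def power2_eq_square algebra_simps)
  qed
  then have D_pos: "D > 0" using c by (smt (verit) zero_less_power2)
  have "sqrt D < s"
    using c s real_sqrt_less_mono[of D "s\<^sup>2"] by (simp add: D_def)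
  then show "0 < \<zeta>" by (simp add: \<zeta>_def D_def)
  have "s - 2 < sqrt D"
  proof (cases "s \<le> 2")
    case False
    then have "(s - 2)\<^sup>2 < D" using c by (simp add: D_def power2_eq_square algebra_simps)
    then show ?thesis using False real_sqrt_less_mono by fastforce
  qed (use D_pos in \<open>smt (verit) real_sqrt_gt_zero\<close>)
  then show "\<zeta> < 1" by (simp add: \<zeta>_def D_def)
  have "2 - s \<le> sqrt D"
  proof (cases "s \<ge> 2")
    case False
    then have "(2 - s)\<^sup>2 \<le> D" using s by (simp add: D_def power2_eq_square algebra_simps)
    then show ?thesis using False real_sqrt_le_mono by fastforce
  qed (use D_pos in \<open>smt (verit) real_sqrt_gt_zero\<close>)
  then show "s - \<zeta> \<ge> 1" unfolding \<zeta>_def D_def by argo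
  have "\<zeta> * (s - \<zeta>) = (s\<^sup>2 - (sqrt D)\<^sup>2) / 4"
    by (simp add: \<zeta>_def D_def power2_eq_square field_simps)
  then show "\<zeta> * (s - \<zeta>) = c" using D_pos by (simp add: D_def)
qed

section \<open>The smaller root \<open>\<zeta>\<^sub>-\<close>\<close>

lemma sigma_Suc: "sigma r (Suc k) = sigma r k + r (Suc k)"
  by (simp add: sigma_def)

lemma sigma_split_top:
  "\<kappa> \<le> K \<Longrightarrow> sigma r K = sigma r (K - \<kappa>) + (\<Sum>k=1..\<kappa>. r (K + 1 - k))"
proof (induction \<kappa>)
  case (Suc \<kappa>)
  then have "K - \<kappa> = Suc (K - Suc \<kappa>)" "K + 1 - Suc \<kappa> = K - \<kappa>" by simp_all
  then show ?case using Suc by (simp add: sigma_Suc)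
qed simp

lemma sigma_pos: "\<forall>k\<in>{1..K}. r k > 0 \<Longrightarrow> 1 \<le> m \<Longrightarrow> m \<le> K \<Longrightarrow> sigma r m > 0"
  unfolding sigma_def by (intro sum_pos) auto

lemma sigma_mono: "\<forall>k\<in>{1..K}. r k > 0 \<Longrightarrow> m \<le> K \<Longrightarrow> sigma r m \<le> sigma r K"
  unfolding sigma_def by (intro sum_mono2) (auto intro: less_imp_le)

definition in_unit_cube :: "nat \<Rightarrow> (nat \<Rightarrow> real) \<Rightarrow> bool" where
  "in_unit_cube d z \<longleftrightarrow> (\<forall>k\<in>{1..d}. 0 \<le> z k \<and> z k \<le> 1)"

lemma in_unit_cube_mono: "in_unit_cube d z \<Longrightarrow> d' \<le> d \<Longrightarrow> in_unit_cube d' z"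
  by (auto simp: in_unit_cube_def)

lemma beta_le_sigma_diff:
  assumes r: "\<forall>k\<in>{1..K}. r k > 0" and "\<kappa> \<le> K" and z: "in_unit_cube \<kappa> z"
  shows "beta K r \<kappa> z \<le> sigma r K - sigma r (K - \<kappa>)"
proof -
  have "r (K + 1 - k) > 0" if "k \<in> {1..\<kappa>}" for k
  proof -
    have "K + 1 - k \<in> {1..K}" using that \<open>\<kappa> \<le> K\<close> by auto
    then show ?thesis using r by blast
  qed
  then have "beta K r \<kappa> z \<le> (\<Sum>k=1..\<kappa>. r (K + 1 - k))"
    unfolding beta_def using z
    by (intro sum_mono) (simp add: in_unit_cube_def mult_left_le_one_le less_imp_le)
  then show ?thesis using sigma_split_top[OF \<open>\<kappa> \<le> K\<close>, of r] by linarith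
qed

lemma zeta_minus_bounds:
  assumes r: "\<forall>k\<in>{1..K}. r k > 0" and r_lt_1: "sigma r K < 1" and "\<kappa> < K"
    and z: "in_unit_cube \<kappa> z"
  defines "s \<equiv> 1 + sigma r K - beta K r \<kappa> z"
  shows "0 < zeta_minus K r \<kappa> z" "zeta_minus K r \<kappa> z < 1" "s - zeta_minus K r \<kappa> z \<ge> 1"
    "zeta_minus K r \<kappa> z * (s - zeta_minus K r \<kappa> z) = sigma r (K - \<kappa>)"
proof -
  have "0 < sigma r (K - \<kappa>)" using sigma_pos[OF r, of "K - \<kappa>"] \<open>\<kappa> < K\<close> by simp
  moreover have "sigma r (K - \<kappa>) < 1" using sigma_mono[OF r, of "K - \<kappa>"] r_lt_1 by simp
  moreover have "s \<ge> 1 + sigma r (K - \<kappa>)"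
    using beta_le_sigma_diff[OF r _ z] \<open>\<kappa> < K\<close> by (simp add: s_def)
  ultimately have roots: "0 < (s - sqrt (s\<^sup>2 - 4 * sigma r (K - \<kappa>))) / 2"
    "(s - sqrt (s\<^sup>2 - 4 * sigma r (K - \<kappa>))) / 2 < 1"
    "s - (s - sqrt (s\<^sup>2 - 4 * sigma r (K - \<kappa>))) / 2 \<ge> 1"
    "(s - sqrt (s\<^sup>2 - 4 * sigma r (K - \<kappa>))) / 2 * (s - (s - sqrt (s\<^sup>2 - 4 * sigma r (K - \<kappa>))) / 2)
      = sigma r (K - \<kappa>)"
    by (rule quadratic_smaller_root_bounds)+
  have zeta: "zeta_minus K r \<kappa> z = (s - sqrt (s\<^sup>2 - 4 * sigma r (K - \<kappa>))) / 2"
    by (simp add: zeta_minus_def s_def Let_def)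
  show "0 < zeta_minus K r \<kappa> z" "zeta_minus K r \<kappa> z < 1" "s - zeta_minus K r \<kappa> z \<ge> 1"
    "zeta_minus K r \<kappa> z * (s - zeta_minus K r \<kappa> z) = sigma r (K - \<kappa>)"
    unfolding zeta by (fact roots)+
qed

lemma one_minus_mult_zeta_minus_pos:
  assumes "\<forall>k\<in>{1..K}. r k > 0" "sigma r K < 1" "\<kappa> < K" "in_unit_cube \<kappa> z" "0 \<le> x" "x \<le> 1"
  shows "1 - x * zeta_minus K r \<kappa> z > 0"
proof -
  have "x * zeta_minus K r \<kappa> z \<le> zeta_minus K r \<kappa> z"
    using assms zeta_minus_bounds(1) by (simp add: mult_left_le_one_le)
  then show ?thesis using assms zeta_minus_bounds(2) by fastforce
qed

lemma zeta_minus_one_level: "0 \<le> r 1 \<Longrightarrow> r 1 \<le> 1 \<Longrightarrow> zeta_minus 1 r 0 z = r 1"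
proof -
  assume "0 \<le> r 1" "r 1 \<le> 1"
  have "(1 + r 1)\<^sup>2 - 4 * r 1 = (1 - r 1)\<^sup>2" by (simp add: power2_eq_square algebra_simps)
  with \<open>r 1 \<le> 1\<close> show ?thesis by (simp add: zeta_minus_def beta_def sigma_def)
qed

section \<open>Generating functions of the level-1 slices\<close>

definition arrival_term :: "(nat \<Rightarrow> real) \<Rightarrow> ((nat \<Rightarrow> nat) \<Rightarrow> real) \<Rightarrow> nat \<Rightarrow> (nat \<Rightarrow> nat) \<Rightarrow> real" where
  "arrival_term r p \<kappa> n = r \<kappa> * (if n \<kappa> > 0 then p (n(\<kappa> := n \<kappa> - 1)) else 0)"

text \<open>A service completion admits the highest-priority waiting client, so it leads from
  \<open>n + e\<^sub>\<kappa>\<close> to \<open>n\<close> only when the levels above \<open>\<kappa>\<close> are empty in \<open>n\<close>.\<close>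

definition service_term :: "((nat \<Rightarrow> nat) \<Rightarrow> real) \<Rightarrow> nat \<Rightarrow> (nat \<Rightarrow> nat) \<Rightarrow> real" where
  "service_term p \<kappa> n = (if \<forall>j\<in>{1..<\<kappa>}. n j = 0 then p (n(\<kappa> := n \<kappa> + 1)) else 0)"

definition empty_queue_term :: "nat \<Rightarrow> ((nat \<Rightarrow> nat) \<Rightarrow> real) \<Rightarrow> (nat \<Rightarrow> nat) \<Rightarrow> real" where
  "empty_queue_term K p n = (if \<forall>j\<in>{1..K}. n j = 0 then p n else 0)"

lemma balance_eq_iff:
  "balance_eq K r p n \<longleftrightarrow>
     (1 + sigma r K) * p n = empty_queue_term K p n + (\<Sum>\<kappa>=1..K. arrival_term r p \<kappa> n + service_term p \<kappa> n)"
  by (simp add: balance_eq_def arrival_term_def service_term_def empty_queue_term_def)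

lemma states_upd: "k \<in> {1..K} \<Longrightarrow> n \<in> states K \<Longrightarrow> n(k := v) \<in> states K"
  by (auto simp: states_def)

definition slice :: "nat \<Rightarrow> nat \<Rightarrow> (nat \<Rightarrow> nat) set" where
  "slice K l = {n \<in> states K. n 1 = l}"

definition zweight :: "nat \<Rightarrow> (nat \<Rightarrow> real) \<Rightarrow> (nat \<Rightarrow> nat) \<Rightarrow> real" where
  "zweight K z n = (\<Prod>j=2..K. z (K + 1 - j) ^ n j)"

lemma genfun_eq_infsum_slice: "genfun K p l z = (\<Sum>\<^sub>\<infinity>n\<in>slice K l. p n * zweight K z n)"
  by (simp add: genfun_def zweight_def slice_def)

lemma zweight_bounds:
  assumes "in_unit_cube (K - 1) z"
  shows "0 \<le> zweight K z n" "zweight K z n \<le> 1"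
proof -
  have "0 \<le> z (K + 1 - j) ^ n j \<and> z (K + 1 - j) ^ n j \<le> 1" if "j \<in> {2..K}" for j
  proof -
    have "K + 1 - j \<in> {1..K - 1}" using that by auto
    then show ?thesis using assms by (simp add: in_unit_cube_def power_le_one)
  qed
  then show "0 \<le> zweight K z n" "zweight K z n \<le> 1"
    unfolding zweight_def by (auto intro: prod_nonneg prod_le_1)
qed

lemma zweight_upd_outside: "k \<notin> {2..K} \<Longrightarrow> zweight K z (n(k := v)) = zweight K z n"
  unfolding zweight_def by (rule prod.cong) auto

lemma zweight_incr:
  assumes "\<kappa> \<in> {2..K}"
  shows "zweight K z (n(\<kappa> := Suc (n \<kappa>))) = z (Suc K - \<kappa>) * zweight K z n"
proof -
  have "zweight K z (n(\<kappa> := Suc (n \<kappa>)))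
      = (\<Prod>j=2..K. z (K + 1 - j) ^ n j * (if j = \<kappa> then z (K + 1 - j) else 1))"
    unfolding zweight_def by (intro prod.cong) auto
  then show ?thesis using assms by (simp add: prod.distrib zweight_def)
qed

lemma beta_top: "beta K r (K - 1) z = (\<Sum>\<kappa>=2..K. r \<kappa> * z (K + 1 - \<kappa>))"
  unfolding beta_def
  by (rule sum.reindex_bij_witness[where i = "\<lambda>\<kappa>. K + 1 - \<kappa>" and j = "\<lambda>k. K + 1 - k"]) auto

lemma summable_infsum_slices:
  fixes f :: "(nat \<Rightarrow> nat) \<Rightarrow> real"
  assumes "f summable_on states K"
  shows "(\<lambda>l. infsum f (slice K l)) summable_on UNIV"
    and "infsum f (states K) = (\<Sum>\<^sub>\<infinity>l. infsum f (slice K l))"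
  using infsum_fibers[OF assms, of "\<lambda>n. n 1" UNIV] by (simp_all add: slice_def)

definition joint_genfun :: "nat \<Rightarrow> ((nat \<Rightarrow> nat) \<Rightarrow> real) \<Rightarrow> real \<Rightarrow> (nat \<Rightarrow> real) \<Rightarrow> real" where
  "joint_genfun K p x z = (\<Sum>\<^sub>\<infinity>n\<in>states K. p n * (x ^ n 1 * zweight K z n))"

locale prio_queue =
  fixes K :: nat and r :: "nat \<Rightarrow> real" and P :: "(nat \<Rightarrow> nat) \<Rightarrow> real"
  assumes K_ge_1: "K \<ge> 1" and r_pos: "\<forall>k\<in>{1..K}. r k > 0" and sigma_lt_1: "sigma r K < 1"
    and P_solution: "is_normalized_solution K r P"
begin

lemma P_nonneg: "n \<in> states K \<Longrightarrow> P n \<ge> 0"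
  and P_summable: "P summable_on states K"
  and P_infsum: "infsum P (states K) = 1"
  and P_balance: "n \<in> states K \<Longrightarrow> balance_eq K r P n"
  using P_solution by (auto simp: is_normalized_solution_def)

lemma summable_on_P_mult:
  assumes "A \<subseteq> states K" "\<And>n. n \<in> A \<Longrightarrow> 0 \<le> u n \<and> u n \<le> 1"
  shows "(\<lambda>n. P n * u n) summable_on A"
proof (rule summable_on_comparison_test)
  show "P summable_on A" using summable_on_subset_banach[OF P_summable assms(1)] .
  show "P n * u n \<le> P n" "0 \<le> P n * u n" if "n \<in> A" for n
    using that assms P_nonneg[of n] by (auto simp: mult_left_le)
qed

lemma has_sum_genfun:
  assumes "in_unit_cube (K - 1) z"
  shows "((\<lambda>n. P n * zweight K z n) has_sum genfun K P l z) (slice K l)"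
proof -
  have "(\<lambda>n. P n * zweight K z n) summable_on slice K l"
    using zweight_bounds[OF assms] by (intro summable_on_P_mult) (auto simp: slice_def)
  then show ?thesis by (simp add: genfun_eq_infsum_slice)
qed

lemma has_sum_genfun_shift:
  assumes "in_unit_cube (K - 1) z"
  shows "((\<lambda>n. P (n(1 := l')) * zweight K z n) has_sum genfun K P l' z) (slice K l)"
  using has_sum_genfun[OF assms, of l'] K_ge_1
  by (subst has_sum_reindex_bij_witness[where j = "\<lambda>n. n(1 := l')" and i = "\<lambda>n. n(1 := l)"
        and T = "slice K l'" and h = "\<lambda>n. P n * zweight K z n"])
    (auto simp: slice_def states_upd zweight_upd_outside)

lemma has_sum_genfun_arrival:
  assumes z: "in_unit_cube (K - 1) z" and \<kappa>: "\<kappa> \<in> {2..K}"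
  shows "((\<lambda>n. arrival_term r P \<kappa> n * zweight K z n)
           has_sum (r \<kappa> * z (K + 1 - \<kappa>) * genfun K P l z)) (slice K l)"
proof -
  define T where "T = {n \<in> slice K l. n \<kappa> > 0}"
  let ?c = "r \<kappa> * z (K + 1 - \<kappa>)"
  have "((\<lambda>m. ?c * (P m * zweight K z m)) has_sum ?c * genfun K P l z) (slice K l)"
    by (rule has_sum_cmult_right[OF has_sum_genfun[OF z]])
  then have "((\<lambda>n. r \<kappa> * P (n(\<kappa> := n \<kappa> - 1)) * zweight K z n) has_sum ?c * genfun K P l z) T"
    using \<kappa>
    by (subst (asm) has_sum_reindex_bij_witness[where j = "\<lambda>m. m(\<kappa> := m \<kappa> + 1)"
          and i = "\<lambda>n. n(\<kappa> := n \<kappa> - 1)" and T = T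
          and h = "\<lambda>n. r \<kappa> * P (n(\<kappa> := n \<kappa> - 1)) * zweight K z n"])
      (auto simp: T_def slice_def states_upd zweight_incr)
  then show ?thesis
    by (rule has_sum_cong_neutral[THEN iffD2, rotated -1]) (auto simp: T_def arrival_term_def)
qed

lemma balance_eq_on_slice:
  assumes n: "n \<in> states K" "n 1 = l" and "l \<ge> 1"
  shows "(1 + sigma r K) * P n
    = r 1 * P (n(1 := l - 1)) + P (n(1 := l + 1)) + (\<Sum>\<kappa>=2..K. arrival_term r P \<kappa> n)"
proof -
  let ?f = "\<lambda>\<kappa>. arrival_term r P \<kappa> n + service_term P \<kappa> n"
  have "empty_queue_term K P n = 0"
    using K_ge_1 n \<open>l \<ge> 1\<close> by (force simp: empty_queue_term_def)
  moreover have "(\<Sum>\<kappa>=1..K. ?f \<kappa>) = ?f 1 + (\<Sum>\<kappa>=2..K. ?f \<kappa>)"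
    using sum.atLeast_Suc_atMost[of 1 K ?f] K_ge_1 by (simp add: numeral_2_eq_2)
  moreover have "service_term P \<kappa> n = 0" if "\<kappa> \<in> {2..K}" for \<kappa>
    using that n \<open>l \<ge> 1\<close> by (force simp: service_term_def)
  ultimately show ?thesis
    using P_balance[OF n(1)] n \<open>l \<ge> 1\<close>
    by (simp add: balance_eq_iff arrival_term_def service_term_def sum.distrib)
qed

lemma genfun_recurrence:
  assumes z: "in_unit_cube (K - 1) z" and "l \<ge> 1"
  shows "genfun K P (l + 1) z
    = (1 + sigma r K - beta K r (K - 1) z) * genfun K P l z - r 1 * genfun K P (l - 1) z"
proof -
  let ?G = "\<lambda>l. genfun K P l z" and ?w = "zweight K z"
  let ?rhs = "r 1 * ?G (l - 1) + ?G (l + 1) + (\<Sum>\<kappa>=2..K. r \<kappa> * z (K + 1 - \<kappa>) * ?G l)"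
  have "((\<lambda>n. r 1 * (P (n(1 := l - 1)) * ?w n) + P (n(1 := l + 1)) * ?w n
      + (\<Sum>\<kappa>=2..K. arrival_term r P \<kappa> n * ?w n)) has_sum ?rhs) (slice K l)"
    by (intro has_sum_add has_sum_cmult_right has_sum_sum has_sum_genfun_shift
        has_sum_genfun_arrival z) auto
  moreover have "(1 + sigma r K) * (P n * ?w n) = r 1 * (P (n(1 := l - 1)) * ?w n)
      + P (n(1 := l + 1)) * ?w n + (\<Sum>\<kappa>=2..K. arrival_term r P \<kappa> n * ?w n)"
    if "n \<in> slice K l" for n
  proof -
    have "(1 + sigma r K) * P n
        = r 1 * P (n(1 := l - 1)) + P (n(1 := l + 1)) + (\<Sum>\<kappa>=2..K. arrival_term r P \<kappa> n)"
      using that \<open>l \<ge> 1\<close> by (intro balance_eq_on_slice) (auto simp: slice_def)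
    then show ?thesis by (simp add: distrib_right sum_distrib_right mult.assoc flip: mult.assoc)
  qed
  ultimately have "((\<lambda>n. (1 + sigma r K) * (P n * ?w n)) has_sum ?rhs) (slice K l)"
    by (subst has_sum_cong) auto
  moreover have "((\<lambda>n. (1 + sigma r K) * (P n * ?w n)) has_sum (1 + sigma r K) * ?G l) (slice K l)"
    by (intro has_sum_cmult_right has_sum_genfun z)
  ultimately have "(1 + sigma r K) * ?G l = ?rhs" using has_sum_unique by blast
  then show ?thesis unfolding beta_top by (simp add: sum_distrib_left sum_distrib_right algebra_simps)
qed

lemma genfun_nonneg: "in_unit_cube (K - 1) z \<Longrightarrow> genfun K P l z \<ge> 0"
  unfolding genfun_eq_infsum_slice
  by (intro infsum_nonneg mult_nonneg_nonneg P_nonneg zweight_bounds) (auto simp: slice_def)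

lemma sum_genfun_le_1:
  assumes z: "in_unit_cube (K - 1) z"
  shows "(\<Sum>l<N. genfun K P l z) \<le> 1"
proof -
  let ?f = "\<lambda>n. P n * zweight K z n"
  have f: "?f summable_on states K"
    using zweight_bounds[OF z] by (intro summable_on_P_mult) auto
  have "(\<Sum>l<N. genfun K P l z) \<le> (\<Sum>\<^sub>\<infinity>l. genfun K P l z)"
    using summable_infsum_slices(1)[OF f] genfun_nonneg[OF z]
    by (intro finite_sum_le_infsum) (auto simp: genfun_eq_infsum_slice)
  also have "\<dots> = infsum ?f (states K)"
    using summable_infsum_slices(2)[OF f] by (simp add: genfun_eq_infsum_slice)
  also have "\<dots> \<le> infsum P (states K)"
    using f P_summable zweight_bounds[OF z] by (intro infsum_mono) (auto simp: P_nonneg mult_left_le)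
  finally show ?thesis using P_infsum by simp
qed

lemma genfun_geometric:
  assumes z: "in_unit_cube (K - 1) z"
  shows "genfun K P l z = genfun K P 0 z * zeta_minus K r (K - 1) z ^ l"
proof -
  let ?s = "1 + sigma r K - beta K r (K - 1) z" and ?\<zeta> = "zeta_minus K r (K - 1) z"
  have "K - 1 < K" using K_ge_1 by simp
  note roots = zeta_minus_bounds[OF r_pos sigma_lt_1 this z]
  have "?\<zeta> * (?s - ?\<zeta>) = r 1" using roots(4) K_ge_1 by (simp add: sigma_def)
  then have "genfun K P (l + 1) z
      = (?\<zeta> + (?s - ?\<zeta>)) * genfun K P l z - ?\<zeta> * (?s - ?\<zeta>) * genfun K P (l - 1) z"
    if "l \<ge> 1" for l
    using genfun_recurrence[OF z that] by simp
  then show ?thesis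
    using roots genfun_nonneg[OF z] sum_genfun_le_1[OF z]
    by (intro bounded_nonneg_recurrence_solution_geometric[where b = "?s - ?\<zeta>" and C = 1]) auto
qed

lemma summable_on_joint_genfun:
  assumes "in_unit_cube (K - 1) z" "0 \<le> x" "x \<le> 1"
  shows "(\<lambda>n. P n * (x ^ n 1 * zweight K z n)) summable_on states K"
  using zweight_bounds[OF assms(1)] assms(2,3)
  by (intro summable_on_P_mult) (auto simp: mult_le_one power_le_one)

lemma joint_genfun_eq:
  assumes z: "in_unit_cube (K - 1) z" and x: "0 \<le> x" "x \<le> 1"
  shows "joint_genfun K P x z = genfun K P 0 z / (1 - x * zeta_minus K r (K - 1) z)"
proof -
  let ?q = "x * zeta_minus K r (K - 1) z" and ?f = "\<lambda>n. P n * (x ^ n 1 * zweight K z n)"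
  have "K - 1 < K" using K_ge_1 by simp
  have q: "0 \<le> ?q" "?q < 1"
    using x zeta_minus_bounds(1)[OF r_pos sigma_lt_1 \<open>K - 1 < K\<close> z]
      one_minus_mult_zeta_minus_pos[OF r_pos sigma_lt_1 \<open>K - 1 < K\<close> z x] by simp_all
  have slice_sum: "infsum ?f (slice K l) = genfun K P 0 z * ?q ^ l" for l
  proof -
    have "infsum ?f (slice K l) = (\<Sum>\<^sub>\<infinity>n\<in>slice K l. x ^ l * (P n * zweight K z n))"
      by (intro infsum_cong) (simp add: slice_def)
    also have "\<dots> = x ^ l * genfun K P l z"
      by (simp add: infsum_cmult_right' genfun_eq_infsum_slice)
    finally show ?thesis using genfun_geometric[OF z, of l] by (simp add: power_mult_distrib)
  qed
  have "((\<lambda>l. genfun K P 0 z * ?q ^ l) has_sum genfun K P 0 z * (1 / (1 - ?q))) UNIV"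
    using q genfun_nonneg[OF z] geometric_sums[of ?q]
    by (intro sums_nonneg_imp_has_sum sums_mult) auto
  then show ?thesis
    unfolding joint_genfun_def summable_infsum_slices(2)[OF summable_on_joint_genfun[OF z x]] slice_sum
    by (simp add: infsumI)
qed

end

section \<open>Lumping the two highest levels\<close>

definition merge_rates :: "(nat \<Rightarrow> real) \<Rightarrow> nat \<Rightarrow> real" where
  "merge_rates r k = (if k = 1 then r 1 + r 2 else r (k + 1))"

definition merge_state :: "(nat \<Rightarrow> nat) \<Rightarrow> nat \<Rightarrow> nat" where
  "merge_state n k = (if k = 0 then 0 else if k = 1 then n 1 + n 2 else n (k + 1))"

definition split_state :: "(nat \<Rightarrow> nat) \<Rightarrow> nat \<Rightarrow> nat \<Rightarrow> nat" where
  "split_state m i k = (if k = 0 then 0 else if k = 1 then i else if k = 2 then m 1 - i else m (k - 1))"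

definition merge_dist :: "((nat \<Rightarrow> nat) \<Rightarrow> real) \<Rightarrow> (nat \<Rightarrow> nat) \<Rightarrow> real" where
  "merge_dist p m = (\<Sum>i\<le>m 1. p (split_state m i))"

lemma sigma_merge_rates: "sigma (merge_rates r) (Suc k) = sigma r (Suc (Suc k))"
proof (induction k)
  case 0
  show ?case by (simp add: sigma_def merge_rates_def numeral_2_eq_2)
next
  case (Suc k)
  then show ?case by (simp add: sigma_Suc merge_rates_def)
qed

lemma sigma_merge_rates_top: "K \<ge> 2 \<Longrightarrow> sigma (merge_rates r) (K - 1) = sigma r K"
  using sigma_merge_rates[of r "K - 2"] by (simp add: numeral_2_eq_2 Suc_diff_Suc)

lemma merge_rates_pos:
  assumes "K \<ge> 2" "\<forall>k\<in>{1..K}. r k > 0"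
  shows "\<forall>k\<in>{1..K - 1}. merge_rates r k > 0"
proof
  fix k assume "k \<in> {1..K - 1}"
  then have "k + 1 \<in> {1..K}" "1 \<in> {1..K}" "2 \<in> {1..K}" using assms(1) by auto
  then show "merge_rates r k > 0" using assms(2) by (simp add: merge_rates_def add_pos_pos)
qed

lemma zeta_minus_merge_rates:
  assumes "K \<ge> 2" "\<kappa> \<le> K - 2"
  shows "zeta_minus (K - 1) (merge_rates r) \<kappa> z = zeta_minus K r \<kappa> z"
proof -
  have "beta (K - 1) (merge_rates r) \<kappa> z = beta K r \<kappa> z"
    unfolding beta_def using assms by (intro sum.cong) (auto simp: merge_rates_def Suc_diff_le)
  moreover have "sigma (merge_rates r) (K - 1 - \<kappa>) = sigma r (K - \<kappa>)"
  proof -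
    have "K - 1 - \<kappa> = Suc (K - 2 - \<kappa>)" "K - \<kappa> = Suc (Suc (K - 2 - \<kappa>))" using assms by arith+
    then show ?thesis by (simp only: sigma_merge_rates)
  qed
  ultimately show ?thesis using sigma_merge_rates_top[OF assms(1)] by (simp add: zeta_minus_def)
qed

lemma split_state_in_states:
  assumes "K \<ge> 2" "m \<in> states (K - 1)"
  shows "split_state m i \<in> states K"
proof -
  have "m (k - 1) = 0" if "k > K" for k
  proof -
    have "k - 1 \<notin> {1..K - 1}" using that assms(1) by auto
    then show ?thesis using assms(2) by (simp add: states_def)
  qed
  then show ?thesis using assms(1) by (simp add: states_def split_state_def)
qed

lemma merge_state_in_states: "K \<ge> 2 \<Longrightarrow> n \<in> states K \<Longrightarrow> merge_state n \<in> states (K - 1)"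
  by (auto simp: states_def merge_state_def)

lemma merge_split_state: "m \<in> states (K - 1) \<Longrightarrow> i \<le> m 1 \<Longrightarrow> merge_state (split_state m i) = m"
  by (rule ext) (auto simp: states_def merge_state_def split_state_def)

lemma split_merge_state: "n \<in> states K \<Longrightarrow> split_state (merge_state n) (n 1) = n"
  by (rule ext) (auto simp: states_def merge_state_def split_state_def)

lemma merge_state_fiber:
  assumes "K \<ge> 2" "m \<in> states (K - 1)"
  shows "{n \<in> states K. merge_state n = m} = split_state m ` {..m 1}"
proof
  show "{n \<in> states K. merge_state n = m} \<subseteq> split_state m ` {..m 1}"
  proof
    fix n assume "n \<in> {n \<in> states K. merge_state n = m}"
    then have "n = split_state m (n 1)" "n 1 \<le> m 1"
      using split_merge_state[of n K] by (auto simp: merge_state_def)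
    then show "n \<in> split_state m ` {..m 1}" by blast
  qed
  show "split_state m ` {..m 1} \<subseteq> {n \<in> states K. merge_state n = m}"
    using split_state_in_states[OF assms] merge_split_state[OF assms(2)] by auto
qed

lemma summable_infsum_merge_dist:
  fixes f :: "(nat \<Rightarrow> nat) \<Rightarrow> real"
  assumes "K \<ge> 2" and f: "f summable_on states K"
  shows "merge_dist f summable_on states (K - 1)"
    and "infsum f (states K) = infsum (merge_dist f) (states (K - 1))"
proof -
  have "inj_on (split_state m) A" for m A
    by (rule inj_onI) (drule fun_cong[of _ _ 1], simp add: split_state_def)
  then have fiber_sum: "infsum f {n \<in> states K. merge_state n = m} = merge_dist f m"
    if "m \<in> states (K - 1)" for m
    by (simp add: merge_state_fiber[OF assms(1) that] sum.reindex merge_dist_def)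
  have "merge_state ` states K \<subseteq> states (K - 1)"
    using merge_state_in_states[OF assms(1)] by auto
  note fibers = infsum_fibers[OF f this]
  show "merge_dist f summable_on states (K - 1)"
    using fibers(1) by (subst (asm) summable_on_cong[OF fiber_sum])
  show "infsum f (states K) = infsum (merge_dist f) (states (K - 1))"
    using fibers(2) by (subst (asm) infsum_cong[OF fiber_sum])
qed

lemma split_state_prefix_zero:
  assumes "\<kappa> \<ge> 3"
  shows "(\<forall>j\<in>{1..<\<kappa>}. split_state m i j = 0) \<longleftrightarrow> i = 0 \<and> (\<forall>j\<in>{1..<\<kappa> - 1}. m j = 0)"
proof
  assume zero: "\<forall>j\<in>{1..<\<kappa>}. split_state m i j = 0"
  have "m j = 0" if "j \<in> {1..<\<kappa> - 1}" for j
    using that assms zero[rule_format, of 1] zero[rule_format, of 2] zero[rule_format, of "j + 1"]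
    by (cases "j = 1") (auto simp: split_state_def)
  then show "i = 0 \<and> (\<forall>j\<in>{1..<\<kappa> - 1}. m j = 0)"
    using assms zero[rule_format, of 1] by (auto simp: split_state_def)
next
  assume "i = 0 \<and> (\<forall>j\<in>{1..<\<kappa> - 1}. m j = 0)"
  then have i: "i = 0" and m: "\<And>j. j \<in> {1..<\<kappa> - 1} \<Longrightarrow> m j = 0" by auto
  show "\<forall>j\<in>{1..<\<kappa>}. split_state m i j = 0"
  proof
    fix j assume j: "j \<in> {1..<\<kappa>}"
    show "split_state m i j = 0"
    proof (cases "j \<le> 2")
      case True
      then show ?thesis using i j m[of 1] assms by (auto simp: split_state_def)
    next
      case False
      then have "j - 1 \<in> {1..<\<kappa> - 1}" using j by auto
      then show ?thesis using False m[of "j - 1"] by (simp add: split_state_def)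
    qed
  qed
qed

lemma sum_split_empty_queue_term:
  assumes "K \<ge> 2"
  shows "(\<Sum>i\<le>m 1. empty_queue_term K p (split_state m i))
    = empty_queue_term (K - 1) (merge_dist p) m"
proof -
  define empty where "empty \<longleftrightarrow> (\<forall>j\<in>{1..K - 1}. m j = 0)"
  have "{1..<K} = {1..K - 1}" by auto
  then have "empty_queue_term K p (split_state m i)
      = (if empty \<and> i = 0 then p (split_state m 0) else 0)" for i
    using split_state_prefix_zero[of "Suc K" m i] assms
    by (auto simp: atLeastLessThanSuc_atLeastAtMost empty_queue_term_def empty_def)
  moreover have "m 1 = 0" if empty using that assms by (auto simp: empty_def)
  ultimately show ?thesis
    unfolding empty_queue_term_def[of "K - 1"] empty_def[symmetric]
    by (cases empty) (simp_all add: merge_dist_def)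
qed

lemma sum_split_service_term:
  assumes "\<kappa> \<ge> 3"
  shows "(\<Sum>i\<le>m 1. service_term p \<kappa> (split_state m i)) = service_term (merge_dist p) (\<kappa> - 1) m"
proof -
  define empty where "empty \<longleftrightarrow> (\<forall>j\<in>{1..<\<kappa> - 1}. m j = 0)"
  let ?m = "m(\<kappa> - 1 := m (\<kappa> - 1) + 1)"
  have "(split_state m 0)(\<kappa> := split_state m 0 \<kappa> + 1) = split_state ?m 0"
    using assms by (intro ext) (auto simp: split_state_def)
  then have "service_term p \<kappa> (split_state m i)
      = (if empty \<and> i = 0 then p (split_state ?m 0) else 0)" for i
    using split_state_prefix_zero[OF assms, of m i] by (auto simp: service_term_def empty_def)
  moreover have "m 1 = 0" if empty using that assms by (auto simp: empty_def)
  moreover have "\<kappa> - 1 \<noteq> 1" using assms by simp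
  ultimately show ?thesis
    unfolding service_term_def[of "merge_dist p"] empty_def[symmetric]
    by (cases empty) (simp_all add: merge_dist_def)
qed

lemma sum_split_service_terms_1_2:
  "(\<Sum>i\<le>m 1. service_term p 1 (split_state m i) + service_term p 2 (split_state m i))
    = service_term (merge_dist p) 1 m"
proof -
  let ?m = "m(1 := m 1 + 1)"
  have "service_term p 1 (split_state m i) = p (split_state ?m (Suc i))" if "i \<le> m 1" for i
  proof -
    have "(split_state m i)(1 := split_state m i 1 + 1) = split_state ?m (Suc i)"
      using that by (intro ext) (auto simp: split_state_def)
    then show ?thesis by (simp add: service_term_def)
  qed
  moreover have "service_term p 2 (split_state m i) = (if i = 0 then p (split_state ?m 0) else 0)" for i
  proof -
    have "(split_state m 0)(2 := split_state m 0 2 + 1) = split_state ?m 0"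
      by (intro ext) (auto simp: split_state_def)
    moreover have "(\<forall>j\<in>{1..<2}. split_state m i j = 0) \<longleftrightarrow> i = 0"
      by (auto simp: split_state_def)
    ultimately show ?thesis by (auto simp: service_term_def)
  qed
  ultimately have "(\<Sum>i\<le>m 1. service_term p 1 (split_state m i) + service_term p 2 (split_state m i))
      = (\<Sum>i\<le>m 1. p (split_state ?m (Suc i))) + p (split_state ?m 0)"
    by (simp add: sum.distrib)
  also have "\<dots> = (\<Sum>i\<le>Suc (m 1). p (split_state ?m i))"
    by (subst sum.atMost_Suc_shift) simp
  also have "\<dots> = merge_dist p ?m" by (simp add: merge_dist_def)
  finally show ?thesis by (simp add: service_term_def)
qed

lemma sum_split_arrival_term:
  assumes "\<kappa> \<ge> 3"
  shows "(\<Sum>i\<le>m 1. arrival_term r p \<kappa> (split_state m i))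
    = arrival_term (merge_rates r) (merge_dist p) (\<kappa> - 1) m"
proof -
  let ?m = "m(\<kappa> - 1 := m (\<kappa> - 1) - 1)"
  have "(split_state m i)(\<kappa> := m (\<kappa> - 1) - 1) = split_state ?m i" for i
    using assms by (intro ext) (auto simp: split_state_def)
  moreover have "split_state m i \<kappa> = m (\<kappa> - 1)" for i using assms by (simp add: split_state_def)
  moreover have "?m 1 = m 1" "merge_rates r (\<kappa> - 1) = r \<kappa>"
    using assms by (auto simp: merge_rates_def)
  ultimately show ?thesis
    by (simp add: arrival_term_def merge_dist_def sum_distrib_left)
qed

lemma sum_split_arrival_terms_1_2:
  "(\<Sum>i\<le>m 1. arrival_term r p 1 (split_state m i) + arrival_term r p 2 (split_state m i))
    = arrival_term (merge_rates r) (merge_dist p) 1 m"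
proof (cases "m 1")
  case 0
  then show ?thesis by (simp add: arrival_term_def split_state_def)
next
  case (Suc M)
  let ?m = "m(1 := M)"
  have "(\<Sum>i\<le>m 1. arrival_term r p 1 (split_state m i)) = (\<Sum>i\<le>M. r 1 * p (split_state ?m i))"
  proof -
    have "(split_state m (Suc i))(1 := i) = split_state ?m i" for i
      using Suc by (intro ext) (auto simp: split_state_def)
    then show ?thesis
      unfolding Suc sum.atMost_Suc_shift by (simp add: arrival_term_def split_state_def)
  qed
  moreover have "(\<Sum>i\<le>m 1. arrival_term r p 2 (split_state m i)) = (\<Sum>i\<le>M. r 2 * p (split_state ?m i))"
  proof -
    have "arrival_term r p 2 (split_state m i) = r 2 * p (split_state ?m i)" if "i \<le> M" for i
    proof -
      have "(split_state m i)(2 := split_state m i 2 - 1) = split_state ?m i"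
        using that Suc by (intro ext) (auto simp: split_state_def)
      then show ?thesis using that Suc by (simp add: arrival_term_def split_state_def)
    qed
    then have "(\<Sum>i\<le>M. arrival_term r p 2 (split_state m i)) = (\<Sum>i\<le>M. r 2 * p (split_state ?m i))"
      by (intro sum.cong) simp_all
    moreover have "arrival_term r p 2 (split_state m (Suc M)) = 0"
      using Suc by (simp add: arrival_term_def split_state_def)
    ultimately show ?thesis unfolding Suc by simp
  qed
  ultimately show ?thesis
    using Suc by (simp add: arrival_term_def merge_rates_def merge_dist_def sum.distrib
        distrib_right sum_distrib_left)
qed

lemma merge_dist_balance_eq:
  assumes K: "K \<ge> 2" and balance: "\<forall>i\<le>m 1. balance_eq K r p (split_state m i)"
  shows "balance_eq (K - 1) (merge_rates r) (merge_dist p) m"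
proof -
  let ?n = "split_state m"
  define F where "F \<kappa> n = arrival_term r p \<kappa> n + service_term p \<kappa> n" for \<kappa> n
  define F' where
    "F' \<kappa> = arrival_term (merge_rates r) (merge_dist p) \<kappa> m + service_term (merge_dist p) \<kappa> m" for \<kappa>
  have split_levels: "(\<Sum>\<kappa>=1..K. G \<kappa>) = G 1 + G 2 + (\<Sum>\<kappa>=3..K. G \<kappa>)" for G :: "nat \<Rightarrow> real"
    using K by (simp add: sum.atLeast_Suc_atMost numeral_2_eq_2 numeral_3_eq_3)
  have merged_levels: "(\<Sum>\<kappa>=1..K - 1. G \<kappa>) = G 1 + (\<Sum>\<kappa>=3..K. G (\<kappa> - 1))" for G :: "nat \<Rightarrow> real"
  proof -
    have "(\<Sum>\<kappa>=3..K. G (\<kappa> - 1)) = (\<Sum>\<kappa>=2..K - 1. G \<kappa>)"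
      using K by (intro sum.reindex_bij_witness[where i = Suc and j = "\<lambda>\<kappa>. \<kappa> - 1"]) auto
    then show ?thesis using K by (simp add: sum.atLeast_Suc_atMost numeral_2_eq_2)
  qed
  have "(1 + sigma (merge_rates r) (K - 1)) * merge_dist p m = (\<Sum>i\<le>m 1. (1 + sigma r K) * p (?n i))"
    unfolding sigma_merge_rates_top[OF K] by (simp add: merge_dist_def sum_distrib_left)
  also have "\<dots> = (\<Sum>i\<le>m 1. empty_queue_term K p (?n i) + (\<Sum>\<kappa>=1..K. F \<kappa> (?n i)))"
    using balance by (intro sum.cong) (auto simp: balance_eq_iff F_def)
  also have "\<dots> = (\<Sum>i\<le>m 1. empty_queue_term K p (?n i)) + (\<Sum>\<kappa>=1..K. \<Sum>i\<le>m 1. F \<kappa> (?n i))"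
    by (simp add: sum.distrib, rule sum.swap)
  also have "\<dots> = empty_queue_term (K - 1) (merge_dist p) m + (F' 1 + (\<Sum>\<kappa>=3..K. F' (\<kappa> - 1)))"
    unfolding split_levels sum_split_empty_queue_term[OF K]
    using sum_split_arrival_terms_1_2[of r p m] sum_split_service_terms_1_2[of p m]
      sum_split_arrival_term[of _ r p m] sum_split_service_term[of _ p m]
    by (simp add: F_def F'_def sum.distrib)
  finally show ?thesis unfolding balance_eq_iff merged_levels by (simp add: F'_def)
qed

lemma zweight_split_state:
  assumes "K \<ge> 2" "i \<le> m 1"
  shows "z (K - 1) ^ i * zweight K z (split_state m i) = z (K - 1) ^ m 1 * zweight (K - 1) z m"
proof -
  have "zweight K z (split_state m i)
      = z (K - 1) ^ (m 1 - i) * (\<Prod>j=3..K. z (K + 1 - j) ^ split_state m i j)"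
    unfolding zweight_def using assms(1)
    by (subst prod.atLeast_Suc_atMost) (auto simp: split_state_def numeral_3_eq_3)
  also have "(\<Prod>j=3..K. z (K + 1 - j) ^ split_state m i j) = zweight (K - 1) z m"
    unfolding zweight_def using assms(1)
    by (intro prod.reindex_bij_witness[where i = Suc and j = "\<lambda>j. j - 1"]) (auto simp: split_state_def)
  finally show ?thesis using assms(2) by (simp add: mult.assoc flip: power_add)
qed

context prio_queue
begin

lemma prio_queue_merge:
  assumes K: "K \<ge> 2"
  shows "prio_queue (K - 1) (merge_rates r) (merge_dist P)"
proof
  show "1 \<le> K - 1" using K by simp
  show "\<forall>k\<in>{1..K - 1}. 0 < merge_rates r k" by (rule merge_rates_pos[OF K r_pos])
  show "sigma (merge_rates r) (K - 1) < 1"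
    using sigma_merge_rates_top[OF K] sigma_lt_1 by simp
  have "balance_eq (K - 1) (merge_rates r) (merge_dist P) m" if "m \<in> states (K - 1)" for m
    using that by (intro merge_dist_balance_eq[OF K] allI impI P_balance split_state_in_states[OF K])
  then show "is_normalized_solution (K - 1) (merge_rates r) (merge_dist P)"
    unfolding is_normalized_solution_def
    using summable_infsum_merge_dist[OF K P_summable] P_infsum split_state_in_states[OF K]
    by (auto simp: merge_dist_def intro!: sum_nonneg P_nonneg)
qed

lemma joint_genfun_merge:
  assumes K: "K \<ge> 2" and z: "in_unit_cube (K - 1) z"
  shows "joint_genfun K P (z (K - 1)) z = joint_genfun (K - 1) (merge_dist P) (z (K - 1)) z"
proof -
  let ?y = "z (K - 1)"
  have "0 \<le> ?y" "?y \<le> 1" using z K by (auto simp: in_unit_cube_def)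
  note merged = summable_infsum_merge_dist[OF K summable_on_joint_genfun[OF z this]]
  have merged_weight: "merge_dist (\<lambda>n. P n * (?y ^ n 1 * zweight K z n)) m
      = merge_dist P m * (?y ^ m 1 * zweight (K - 1) z m)" for m
    unfolding merge_dist_def sum_distrib_right
    using zweight_split_state[OF K] by (intro sum.cong refl) (simp add: split_state_def)
  show ?thesis unfolding joint_genfun_def merged(2) merged_weight ..
qed

lemma genfun0_one_level:
  assumes "K = 1"
  shows "genfun K P 0 z = 1 - sigma r K"
proof -
  have z: "in_unit_cube (K - 1) z" using assms by (simp add: in_unit_cube_def)
  have "r 1 > 0" "r 1 < 1" using r_pos sigma_lt_1 assms by (auto simp: sigma_def)
  then have "zeta_minus K r (K - 1) z = sigma r K" using assms zeta_minus_one_level by (simp add: sigma_def)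
  moreover have "joint_genfun K P 1 z = 1"
    using P_infsum assms by (simp add: joint_genfun_def zweight_def)
  ultimately have "1 = genfun K P 0 z / (1 - sigma r K)"
    using joint_genfun_eq[OF z, of 1] by simp
  then show ?thesis using sigma_lt_1 by (simp add: field_simps)
qed

lemma genfun0_merge:
  assumes K: "K \<ge> 2" and z: "in_unit_cube (K - 1) z"
  shows "genfun K P 0 z
    = (1 - z (K - 1) * zeta_minus K r (K - 1) z) / (1 - z (K - 1) * zeta_minus K r (K - 1 - 1) z)
      * genfun (K - 1) (merge_dist P) 0 z"
proof -
  let ?y = "z (K - 1)"
  interpret merged: prio_queue "K - 1" "merge_rates r" "merge_dist P"
    by (rule prio_queue_merge[OF K])
  have y: "0 \<le> ?y" "?y \<le> 1" using z K by (auto simp: in_unit_cube_def)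
  have z': "in_unit_cube (K - 1 - 1) z" using z by (rule in_unit_cube_mono) simp
  have "zeta_minus (K - 1) (merge_rates r) (K - 1 - 1) z = zeta_minus K r (K - 1 - 1) z"
    by (rule zeta_minus_merge_rates[OF K]) simp
  then have "genfun K P 0 z / (1 - ?y * zeta_minus K r (K - 1) z)
      = genfun (K - 1) (merge_dist P) 0 z / (1 - ?y * zeta_minus K r (K - 1 - 1) z)"
    using joint_genfun_eq[OF z y] joint_genfun_merge[OF K z] merged.joint_genfun_eq[OF z' y] by simp
  moreover have "1 - ?y * zeta_minus K r (K - 1) z > 0"
    using one_minus_mult_zeta_minus_pos[OF r_pos sigma_lt_1 _ z y] K by simp
  moreover have "1 - ?y * zeta_minus K r (K - 1 - 1) z > 0"
    using one_minus_mult_zeta_minus_pos[OF r_pos sigma_lt_1 _ z' y] K by simp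
  ultimately show ?thesis by (simp add: field_simps)
qed

end

definition genfun0_formula :: "nat \<Rightarrow> (nat \<Rightarrow> real) \<Rightarrow> (nat \<Rightarrow> real) \<Rightarrow> real" where
  "genfun0_formula K r z = (1 - sigma r K) *
     (\<Prod>\<kappa>=1..K - 1. (1 - z \<kappa> * zeta_minus K r \<kappa> z) / (1 - z \<kappa> * zeta_minus K r (\<kappa> - 1) z))"

lemma genfun0_formula_merge:
  assumes K: "K \<ge> 2"
  shows "genfun0_formula K r z
    = (1 - z (K - 1) * zeta_minus K r (K - 1) z) / (1 - z (K - 1) * zeta_minus K r (K - 1 - 1) z)
      * genfun0_formula (K - 1) (merge_rates r) z"
proof -
  define f where "f \<kappa> = (1 - z \<kappa> * zeta_minus K r \<kappa> z) / (1 - z \<kappa> * zeta_minus K r (\<kappa> - 1) z)" for \<kappa>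
  have "genfun0_formula (K - 1) (merge_rates r) z = (1 - sigma r K) * (\<Prod>\<kappa>=1..K - 1 - 1. f \<kappa>)"
    unfolding genfun0_formula_def f_def
    using sigma_merge_rates_top[OF K] zeta_minus_merge_rates[OF K] K
    by (intro arg_cong2[where f = "(*)"] prod.cong) auto
  moreover have "(\<Prod>\<kappa>=1..K - 1. f \<kappa>) = f (K - 1) * (\<Prod>\<kappa>=1..K - 1 - 1. f \<kappa>)"
    using K prod.nat_ivl_Suc'[of 1 "K - 1 - 1" f] by (simp add: numeral_2_eq_2 Suc_diff_Suc)
  ultimately show ?thesis using K by (simp add: genfun0_formula_def f_def)
qed

lemma genfun0_eq_formula:
  "prio_queue K r P \<Longrightarrow> in_unit_cube (K - 1) z \<Longrightarrow> genfun K P 0 z = genfun0_formula K r z"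
proof (induction K arbitrary: r P)
  case 0
  then show ?case by (simp add: prio_queue_def)
next
  case (Suc K)
  interpret prio_queue "Suc K" r P by (rule Suc.prems(1))
  show ?case
  proof (cases "K = 0")
    case True
    then show ?thesis using genfun0_one_level by (simp add: genfun0_formula_def)
  next
    case False
    then have K: "Suc K \<ge> 2" by simp
    have "genfun K (merge_dist P) 0 z = genfun0_formula K (merge_rates r) z"
      using Suc.IH prio_queue_merge[OF K] in_unit_cube_mono[OF Suc.prems(2)] by simp
    then show ?thesis
      using genfun0_merge[OF K Suc.prems(2)] genfun0_formula_merge[OF K] by simp
  qed
qed

lemma genfun_at_zero: "genfun K p 0 (\<lambda>_. 0) = p (\<lambda>_. 0)"
proof -
  have "(\<lambda>_. 0) \<in> slice K 0" by (simp add: slice_def states_def)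
  moreover have "zweight K (\<lambda>_. 0) n = 0" if n: "n \<in> slice K 0" "n \<noteq> (\<lambda>_. 0)" for n
  proof -
    obtain k where k: "n k \<noteq> 0" using n(2) by auto
    have "n \<in> states K" "n 1 = 0" using n(1) by (simp_all add: slice_def)
    have "k \<in> {1..K}"
    proof (rule ccontr)
      assume "k \<notin> {1..K}"
      then show False using \<open>n \<in> states K\<close> k by (simp add: states_def)
    qed
    moreover have "k \<noteq> 1" using \<open>n 1 = 0\<close> k by auto
    ultimately have "k \<in> {2..K}" by auto
    then show ?thesis using k unfolding zweight_def by (intro prod_zero) (auto intro!: bexI[of _ k])
  qed
  ultimately have "genfun K p 0 (\<lambda>_. 0) = (\<Sum>\<^sub>\<infinity>n\<in>{\<lambda>_. 0}. p n)"
    unfolding genfun_eq_infsum_slice by (intro infsum_cong_neutral) (auto simp: zweight_def)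
  then show ?thesis by simp
qed

theorem mainTheorem1:
  fixes K :: nat and r :: "nat \<Rightarrow> real" and P :: "(nat \<Rightarrow> nat) \<Rightarrow> real"
  assumes K2: "K \<ge> 2"
    and rpos: "\<forall>k\<in>{1..K}. r k > 0"
    and rlt1: "sigma r K < 1"
    and Psol: "is_normalized_solution K r P"
  shows "(\<forall>l::nat. \<forall>z::nat \<Rightarrow> real. (\<forall>k\<in>{1..K-1}. 0 \<le> z k \<and> z k \<le> 1) \<longrightarrow>
            (\<forall>\<kappa>\<in>{1..K-1}. 1 - z \<kappa> * zeta_minus K r (\<kappa> - 1) z > 0) \<and>
            genfun K P l z =
              (1 - sigma r K) * zeta_minus K r (K - 1) z ^ l *
              (\<Prod>\<kappa>=1..K-1. (1 - z \<kappa> * zeta_minus K r \<kappa> z) / (1 - z \<kappa> * zeta_minus K r (\<kappa> - 1) z)) \<and>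
            genfun K P l z = genfun K P 0 z * zeta_minus K r (K - 1) z ^ l)
       \<and> P (\<lambda>_. 0) = 1 - sigma r K
       \<and> genfun K P 0 (\<lambda>_. 0) = 1 - sigma r K"
proof -
  have queue: "prio_queue K r P" using assms by unfold_locales auto
  have geometric: "genfun K P l z = genfun K P 0 z * zeta_minus K r (K - 1) z ^ l"
    and closed_form: "genfun K P 0 z = genfun0_formula K r z"
    if "in_unit_cube (K - 1) z" for l z
    using prio_queue.genfun_geometric[OF queue that] genfun0_eq_formula[OF queue that] by blast+
  have denominator_pos: "1 - z \<kappa> * zeta_minus K r (\<kappa> - 1) z > 0"
    if "in_unit_cube (K - 1) z" "\<kappa> \<in> {1..K - 1}" for z \<kappa>
    using that by (intro one_minus_mult_zeta_minus_pos[OF rpos rlt1])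
      (auto simp: in_unit_cube_def elim: in_unit_cube_mono)
  have "genfun K P 0 (\<lambda>_. 0) = 1 - sigma r K"
    using closed_form[of "\<lambda>_. 0"] by (simp add: in_unit_cube_def genfun0_formula_def)
  then show ?thesis
    using geometric closed_form denominator_pos genfun_at_zero[of K P]
    unfolding in_unit_cube_def genfun0_formula_def by (auto simp: mult_ac)
qed

end
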